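(* Let $q>2$ be a prime power and let $M$ be a simple $GF(q)$-representable matroid of rank $r\geq 3$. Suppose that $M\not\cong PG(r-1,q)$ but that $\operatorname{si}(M/e)\cong PG(r-2,q)$ for all $e\in E(M)$. Then $M$ has a member of $\mathcal{N}=\{U_{2,k}:3\leq k\leq q\}\cup\{U_{3,q+2}\}$ as an induced minor.
   Context: $\operatorname{si}$ denotes simplification; every contraction is followed by simplification. An induced minor of $M$ is a matroid obtained from $M$ by a sequence of restrictions to flats and contractions (each followed by simplification). *)

theory Defs
  imports Main
begin

text \<open>Matroids are given by a finite ground set and a rank function
  (only its values on subsets of the ground set matter).\<close>

type_synonym 'a matroid = "'a set \<times> ('a set \<Rightarrow> nat)"

definition gnd :: "'a matroid \<Rightarrow> 'a set" where "gnd M = fst M"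
definition rk :: "'a matroid \<Rightarrow> 'a set \<Rightarrow> nat" where "rk M = snd M"

definition matroid :: "'a matroid \<Rightarrow> bool" where
  "matroid M \<longleftrightarrow> finite (gnd M) \<and>
     (\<forall>X \<subseteq> gnd M. rk M X \<le> card X) \<and>
     (\<forall>X Y. X \<subseteq> Y \<and> Y \<subseteq> gnd M \<longrightarrow> rk M X \<le> rk M Y) \<and>
     (\<forall>X Y. X \<subseteq> gnd M \<and> Y \<subseteq> gnd M \<longrightarrow>
        rk M (X \<union> Y) + rk M (X \<inter> Y) \<le> rk M X + rk M Y)"

definition simple :: "'a matroid \<Rightarrow> bool" where
  "simple M \<longleftrightarrow> (\<forall>e \<in> gnd M. rk M {e} = 1) \<and>
     (\<forall>e \<in> gnd M. \<forall>f \<in> gnd M. e \<noteq> f \<longrightarrow> rk M {e, f} = 2)"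

definition matroid_rank :: "'a matroid \<Rightarrow> nat" where
  "matroid_rank M = rk M (gnd M)"

definition is_flat :: "'a matroid \<Rightarrow> 'a set \<Rightarrow> bool" where
  "is_flat M F \<longleftrightarrow> F \<subseteq> gnd M \<and> (\<forall>e \<in> gnd M - F. rk M (insert e F) > rk M F)"

definition restrict :: "'a matroid \<Rightarrow> 'a set \<Rightarrow> 'a matroid" where
  "restrict M X = (X, rk M)"

definition contract :: "'a matroid \<Rightarrow> 'a set \<Rightarrow> 'a matroid" where
  "contract M C = (gnd M - C, \<lambda>X. rk M (X \<union> C) - rk M C)"

text \<open>S is the ground set of a simplification of M: it consists of non-loops and
  contains exactly one element of every parallel class (rank-1 flat's non-loops).
  The simplification is then restrict M S (well defined up to isomorphism).\<close>
definition is_simplification_set :: "'a matroid \<Rightarrow> 'a set \<Rightarrow> bool" where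
  "is_simplification_set M S \<longleftrightarrow> S \<subseteq> {e \<in> gnd M. rk M {e} = 1} \<and>
     (\<forall>e \<in> gnd M. rk M {e} = 1 \<longrightarrow> (\<exists>!f. f \<in> S \<and> rk M {e, f} = 1))"

definition iso :: "'a matroid \<Rightarrow> 'b matroid \<Rightarrow> bool" where
  "iso M N \<longleftrightarrow> (\<exists>f. bij_betw f (gnd M) (gnd N) \<and>
      (\<forall>X \<subseteq> gnd M. rk N (f ` X) = rk M X))"

inductive induced_minor :: "'a matroid \<Rightarrow> 'a matroid \<Rightarrow> bool" where
  refl: "induced_minor M M"
| flat: "induced_minor M N \<Longrightarrow> is_flat N F \<Longrightarrow> induced_minor M (restrict N F)"
| contr: "induced_minor M N \<Longrightarrow> C \<subseteq> gnd N \<Longrightarrow> is_simplification_set (contract N C) S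
           \<Longrightarrow> induced_minor M (restrict (contract N C) S)"

definition lin_indep :: "(nat \<Rightarrow> 'f::field) set \<Rightarrow> bool" where
  "lin_indep S \<longleftrightarrow> finite S \<and> (\<forall>c. (\<forall>i. (\<Sum>v\<in>S. c v * v i) = 0) \<longrightarrow> (\<forall>v\<in>S. c v = 0))"

definition vrank :: "('a \<Rightarrow> (nat \<Rightarrow> 'f::field)) \<Rightarrow> 'a set \<Rightarrow> nat" where
  "vrank \<phi> X = Max {card Y | Y. Y \<subseteq> X \<and> finite Y \<and> inj_on \<phi> Y \<and> lin_indep (\<phi> ` Y)}"

definition representable_over :: "'f::field itself \<Rightarrow> 'a matroid \<Rightarrow> bool" where
  "representable_over TYPE('f) M \<longleftrightarrow>
     (\<exists>\<phi> :: 'a \<Rightarrow> (nat \<Rightarrow> 'f). \<forall>X \<subseteq> gnd M. rk M X = vrank \<phi> X)"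

text \<open>PG(n, F): points are the 1-dimensional subspaces of F^(n+1), represented by
  the nonzero vectors supported on coordinates 0..n whose first nonzero entry is 1.\<close>
definition PG :: "nat \<Rightarrow> 'f::field itself \<Rightarrow> (nat \<Rightarrow> 'f) matroid" where
  "PG n TYPE('f) = ({v :: nat \<Rightarrow> 'f. (\<forall>i. n < i \<longrightarrow> v i = 0) \<and> (\<exists>i. v i \<noteq> 0) \<and>
                       v (LEAST i. v i \<noteq> 0) = 1}, vrank id)"

definition uniform :: "nat \<Rightarrow> nat \<Rightarrow> nat matroid" where
  "uniform k n = ({0..<n}, \<lambda>X. min k (card X))"

end

(* Fix a representation phi of M over GF(q); the rank of a set is the dimension of the span
   of its vectors, and a line of M (the points whose vectors lie in the span of two of them)
   has at most q + 1 points.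
   If every line has q + 1 points, every nonzero vector in the span of phi(E) is a multiple of
   some phi(x), and coordinates with respect to a basis identify M with PG(r - 1, q). A line
   with between 3 and q points is a flat isomorphic to U(2, k). Otherwise all lines have 2 or
   q + 1 points and some line {x, y} has two. In the plane P spanned by x, y and a third
   point, si(M / p) = PG(r - 2, q) forces every point p of P onto exactly q + 1 lines of P.
   Counting points along these pencils shows that all points lie on the same number a of
   (q + 1)-point lines; such a line meets every other line of P, and double counting gives
   (a - (q + 1)) ((q - 1) a - q) = 0, impossible for 1 <= a <= q and q > 2. So all lines of P
   have two points, P has q + 2 points, and P is a flat isomorphic to U(3, q + 2). *)

theory Submission
  imports Defs "HOL.Vector_Spaces" "HOL-Library.Function_Algebras" "HOL-Library.Cardinality"
begin

section \<open>Linear algebra on \<open>nat \<Rightarrow> 'f\<close>\<close>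

definition vscale :: "'f::field \<Rightarrow> (nat \<Rightarrow> 'f) \<Rightarrow> (nat \<Rightarrow> 'f)" where
  "vscale c v = (\<lambda>i. c * v i)"

lemma vscale_apply [simp]: "vscale c v i = c * v i"
  by (simp add: vscale_def)

interpretation V: vector_space "vscale :: 'f::field \<Rightarrow> (nat \<Rightarrow> 'f) \<Rightarrow> (nat \<Rightarrow> 'f)"
  by unfold_locales (auto simp: vscale_def fun_eq_iff algebra_simps)

lemma sum_apply: "(\<Sum>x\<in>A. f x) (i::nat) = (\<Sum>x\<in>A. f x i)"
  by (induction A rule: infinite_finite_induct) auto

lemma lin_indep_iff_independent:
  "lin_indep (S :: (nat \<Rightarrow> 'f::field) set) \<longleftrightarrow> finite S \<and> V.independent S"
proof (cases "finite S")
  case True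
  have "(\<forall>c. (\<forall>i. (\<Sum>v\<in>S. c v * v i) = 0) \<longrightarrow> (\<forall>v\<in>S. c v = 0)) \<longleftrightarrow>
        \<not> (\<exists>u. (\<exists>v \<in> S. u v \<noteq> 0) \<and> (\<Sum>v\<in>S. vscale (u v) v) = 0)"
    by (auto simp: fun_eq_iff sum_apply)
  then show ?thesis using True V.dependent_finite[OF True] by (simp add: lin_indep_def)
qed (simp add: lin_indep_def)

lemma vrank_eq_dim:
  fixes \<phi> :: "'a \<Rightarrow> nat \<Rightarrow> 'f::field"
  assumes "finite X"
  shows "vrank \<phi> X = V.dim (\<phi> ` X)"
proof -
  let ?K = "{card Y | Y. Y \<subseteq> X \<and> finite Y \<and> inj_on \<phi> Y \<and> lin_indep (\<phi> ` Y)}"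
  obtain B where B: "B \<subseteq> \<phi> ` X" "V.independent B" "\<phi> ` X \<subseteq> V.span B" "card B = V.dim (\<phi> ` X)"
    by (rule V.basis_exists)
  have "finite B" using B(1) assms finite_surj by blast
  have bound: "k \<le> V.dim (\<phi> ` X)" if "k \<in> ?K" for k
  proof -
    obtain Y where Y: "k = card Y" "Y \<subseteq> X" "inj_on \<phi> Y" "V.independent (\<phi> ` Y)"
      using \<open>k \<in> ?K\<close> by (auto simp: lin_indep_iff_independent)
    have "card (\<phi> ` Y) \<le> card B"
      using V.independent_span_bound[OF \<open>finite B\<close> Y(4)] Y(2) B(3) by blast
    then show ?thesis using Y(1,3) B(4) by (simp add: card_image)
  qed
  have "V.dim (\<phi> ` X) \<in> ?K"
  proof -
    define Y where "Y = inv_into X \<phi> ` B"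
    have inv: "\<phi> (inv_into X \<phi> b) = b" if "b \<in> B" for b
      using that B(1) by (auto intro: f_inv_into_f)
    have "Y \<subseteq> X" using B(1) by (auto simp: Y_def inv_into_into)
    moreover have "\<phi> ` Y = B" using inv by (force simp: Y_def)
    moreover have "inj_on \<phi> Y" using inv by (auto simp: Y_def intro: inj_onI)
    ultimately show ?thesis
      using B(2,4) \<open>finite B\<close> assms finite_subset[of Y X] card_image[of \<phi> Y]
      by (auto simp: lin_indep_iff_independent intro!: exI[of _ Y])
  qed
  moreover have "finite ?K" using bound by (meson finite_nat_set_iff_bounded_le)
  ultimately show ?thesis unfolding vrank_def using bound by (intro Max_eqI) auto
qed

lemma dim_insert_independent:
  assumes "V.independent S" "finite S"
  shows "V.dim (insert v S) = (if v \<in> V.span S then card S else Suc (card S))"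
proof (cases "v \<in> V.span S")
  case True
  then have "V.dim (insert v S) = V.dim S" by (metis V.dim_span V.span_redundant)
  then show ?thesis using True assms(1) by (simp add: V.dim_eq_card_independent)
next
  case False
  then have "v \<notin> S" using V.span_base by blast
  have "V.independent (insert v S)" by (rule V.independent_insertI[OF False assms(1)])
  then show ?thesis using False \<open>v \<notin> S\<close> assms(2) by (simp add: V.dim_eq_card_independent)
qed

lemma card_le_dim:
  assumes "V.independent B" "B \<subseteq> S" "finite S"
  shows "card B \<le> V.dim S"
proof -
  obtain C where C: "C \<subseteq> S" "S \<subseteq> V.span C" "card C = V.dim S"
    by (rule V.basis_exists)
  have "finite C" using C(1) assms(3) finite_subset by blast
  then show ?thesis using V.independent_span_bound[OF _ assms(1)] C assms(2) by fastforce
qed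

lemma span_eq_if_independent_card:
  assumes "finite T" "V.independent A" "A \<subseteq> V.span T" "card T \<le> card A"
  shows "V.span A = V.span T"
proof -
  have "finite A" using V.independent_span_bound[OF assms(1,2,3)] by blast
  have "T \<subseteq> V.span A"
  proof
    fix t assume "t \<in> T"
    show "t \<in> V.span A"
    proof (rule ccontr)
      assume t: "t \<notin> V.span A"
      then have "t \<notin> A" using V.span_base by blast
      have "card (insert t A) \<le> card T"
        using V.independent_span_bound[OF assms(1) V.independent_insertI[OF t assms(2)]]
          assms(3) \<open>t \<in> T\<close> V.span_base by blast
      then show False using \<open>t \<notin> A\<close> \<open>finite A\<close> assms(4) by simp
    qed
  qed
  then show ?thesis using assms(3) V.span_eq by blast
qed

lemma (in vector_space_pair) dim_image_eq_if_inj_on_span: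
  assumes f: "Vector_Spaces.linear s1 s2 f" and inj: "inj_on f (vs1.span S)"
  shows "vs2.dim (f ` S) = vs1.dim S"
proof -
  obtain B where B: "B \<subseteq> S" "vs1.independent B" "S \<subseteq> vs1.span B" "card B = vs1.dim S"
    by (rule vs1.basis_exists)
  have span_B: "vs1.span B = vs1.span S"
    using B(1,3) vs1.span_mono vs1.span_span by (metis subset_antisym)
  have "vs2.span (f ` B) = vs2.span (f ` S)"
    using span_B by (simp add: linear_span_image[OF f])
  moreover have "vs2.independent (f ` B)"
    using linear_independent_injective_image[OF f B(2)] inj span_B by simp
  moreover have "card (f ` B) = card B"
    using inj B(1) vs1.span_superset by (intro card_image) (auto intro: inj_on_subset)
  ultimately show ?thesis using B(4) by (metis vs2.dim_eq_card)
qed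

lemma span_pair_iff:
  "v \<in> V.span {a, b} \<longleftrightarrow> (\<exists>\<alpha> \<beta>. v = vscale \<alpha> a + vscale \<beta> (b :: nat \<Rightarrow> 'f::field))"
proof
  assume "v \<in> V.span {a, b}"
  then obtain k where "v - vscale k a \<in> V.span {b}" using V.span_breakdown_eq by blast
  then obtain m where "v - vscale k a = vscale m b" using V.span_singleton by blast
  then show "\<exists>\<alpha> \<beta>. v = vscale \<alpha> a + vscale \<beta> b" by (metis diff_eq_eq add.commute)
next
  assume "\<exists>\<alpha> \<beta>. v = vscale \<alpha> a + vscale \<beta> b"
  then show "v \<in> V.span {a, b}" by (auto intro: V.span_add V.span_scale V.span_base)
qed

lemma independent_pair_iff:
  "V.independent {a, b :: nat \<Rightarrow> 'f::field} \<and> a \<noteq> b \<longleftrightarrow> b \<noteq> 0 \<and> a \<notin> V.span {b}"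
  using V.span_base[of b "{b}"] by (cases "a = b") (auto simp: V.independent_insert)

section \<open>Projective lines\<close>

definition proj_distinct :: "(nat \<Rightarrow> 'f::field) set \<Rightarrow> bool" where
  "proj_distinct Z \<longleftrightarrow> 0 \<notin> Z \<and> (\<forall>z\<in>Z. \<forall>z'\<in>Z. z \<in> V.span {z'} \<longrightarrow> z = z')"

text \<open>The slope identifies the one-dimensional subspaces of \<open>span {a, b}\<close> with
  \<open>'f option\<close>; this is where the count \<open>q + 1\<close> of points on a projective line comes from.\<close>

definition slope :: "(nat \<Rightarrow> 'f::field) \<Rightarrow> (nat \<Rightarrow> 'f) \<Rightarrow> (nat \<Rightarrow> 'f) \<Rightarrow> 'f option" where
  "slope a b v = (let \<alpha> = V.representation {a, b} v a; \<beta> = V.representation {a, b} v b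
                  in if \<alpha> = 0 then None else Some (\<beta> / \<alpha>))"

lemma slope_lincomb:
  fixes a b :: "nat \<Rightarrow> 'f::field"
  assumes "V.independent {a, b}" "a \<noteq> b"
  shows "slope a b (vscale \<alpha> a + vscale \<beta> b) = (if \<alpha> = 0 then None else Some (\<beta> / \<alpha>))"
proof -
  have ab: "a \<in> V.span {a, b}" "b \<in> V.span {a, b}" by (auto intro: V.span_base)
  have "V.representation {a, b} (vscale \<alpha> a + vscale \<beta> b) =
        (\<lambda>c. \<alpha> * V.representation {a, b} a c + \<beta> * V.representation {a, b} b c)"
    using assms(1) ab by (simp add: V.representation_add V.representation_scale V.span_scale)
  then show ?thesis using assms by (simp add: slope_def V.representation_basis)
qed

lemma slope_scale:
  fixes a b :: "nat \<Rightarrow> 'f::field"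
  assumes "V.independent {a, b}" "a \<noteq> b" "v \<in> V.span {a, b}" "c \<noteq> 0"
  shows "slope a b (vscale c v) = slope a b v"
proof -
  obtain \<alpha> \<beta> where v: "v = vscale \<alpha> a + vscale \<beta> b" using assms(3) span_pair_iff by blast
  have "vscale c v = vscale (c * \<alpha>) a + vscale (c * \<beta>) b" by (simp add: v fun_eq_iff algebra_simps)
  then show ?thesis using assms(4) by (simp add: v slope_lincomb[OF assms(1,2)])
qed

lemma parallel_if_slope_eq:
  fixes a b :: "nat \<Rightarrow> 'f::field"
  assumes "V.independent {a, b}" "a \<noteq> b" "v \<in> V.span {a, b}" "w \<in> V.span {a, b}"
    and "w \<noteq> 0" "slope a b v = slope a b w"
  shows "v \<in> V.span {w}"
proof -
  obtain \<alpha> \<beta> where v: "v = vscale \<alpha> a + vscale \<beta> b" using assms(3) span_pair_iff by blast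
  obtain \<alpha>' \<beta>' where w: "w = vscale \<alpha>' a + vscale \<beta>' b" using assms(4) span_pair_iff by blast
  have eq: "(if \<alpha> = 0 then None else Some (\<beta> / \<alpha>)) = (if \<alpha>' = 0 then None else Some (\<beta>' / \<alpha>'))"
    using assms(6) by (simp add: v w slope_lincomb[OF assms(1,2)])
  have "v = vscale (if \<alpha>' = 0 then \<beta> / \<beta>' else \<alpha> / \<alpha>') w"
  proof (cases "\<alpha>' = 0")
    case True
    then have "\<alpha> = 0" "\<beta>' \<noteq> 0" using eq assms(5) w by (auto simp: fun_eq_iff split: if_splits)
    then show ?thesis using True by (simp add: v w fun_eq_iff)
  next
    case False
    then have "\<alpha> \<noteq> 0" "\<beta> = \<alpha> * (\<beta>' / \<alpha>')" using eq by (auto split: if_splits simp: field_simps)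
    then show ?thesis using False by (simp add: v w fun_eq_iff field_simps)
  qed
  then show ?thesis unfolding V.span_singleton by blast
qed

lemma slope_surj:
  fixes a b :: "nat \<Rightarrow> 'f::field"
  assumes "V.independent {a, b}" "a \<noteq> b"
  shows "slope a b ` (V.span {a, b} - {0}) = UNIV"
proof -
  have "t \<in> slope a b ` (V.span {a, b} - {0})" for t
  proof -
    define \<alpha> :: 'f where "\<alpha> = (case t of None \<Rightarrow> 0 | Some _ \<Rightarrow> 1)"
    define \<beta> where "\<beta> = (case t of None \<Rightarrow> 1 | Some s \<Rightarrow> s)"
    let ?v = "vscale \<alpha> a + vscale \<beta> b"
    have "slope a b ?v = t"
      unfolding slope_lincomb[OF assms] by (cases t) (simp_all add: \<alpha>_def \<beta>_def)
    moreover have "slope a b 0 = None"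
      using slope_lincomb[OF assms, of 0 0] by (simp add: fun_eq_iff)
    moreover have "b \<noteq> 0" using assms V.dependent_zero by blast
    ultimately have "?v \<noteq> 0" by (cases t) (auto simp: \<alpha>_def \<beta>_def)
    moreover have "?v \<in> V.span {a, b}" unfolding span_pair_iff by blast
    ultimately show ?thesis using \<open>slope a b ?v = t\<close> by blast
  qed
  then show ?thesis by blast
qed

context
  fixes a b :: "nat \<Rightarrow> 'f::{field,finite}" and Z :: "(nat \<Rightarrow> 'f) set"
  assumes ab: "V.independent {a, b}" "a \<noteq> b"
    and Z: "Z \<subseteq> V.span {a, b}" "proj_distinct Z"
begin

lemma inj_on_slope: "inj_on (slope a b) Z"
  using Z parallel_if_slope_eq[OF ab] unfolding proj_distinct_def inj_on_def by blast

lemma card_proj_distinct_le: "finite Z" "card Z \<le> Suc CARD('f)"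
proof -
  show "finite Z" by (rule finite_imageD[OF _ inj_on_slope]) simp
  have "card Z \<le> CARD('f option)" by (rule card_inj_on_le[OF inj_on_slope]) auto
  then show "card Z \<le> Suc CARD('f)" using card_UNIV_option[where 'a='f] by simp
qed

lemma card_proj_distinct_eq_iff:
  "card Z = Suc CARD('f) \<longleftrightarrow> (\<forall>v \<in> V.span {a, b} - {0}. \<exists>z\<in>Z. v \<in> V.span {z})"
proof -
  have "CARD('f option) = Suc CARD('f)"
    using card_UNIV_option[where 'a='f] by simp
  then have "card Z = Suc CARD('f) \<longleftrightarrow> card (slope a b ` Z) = CARD('f option)"
    using card_image[OF inj_on_slope] by simp
  also have "\<dots> \<longleftrightarrow> slope a b ` Z = UNIV"
    using card_subset_eq[of UNIV "slope a b ` Z"] by (metis finite subset_UNIV)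
  also have "\<dots> \<longleftrightarrow> (\<forall>v \<in> V.span {a, b} - {0}. \<exists>z\<in>Z. v \<in> V.span {z})"
  proof
    assume surj: "slope a b ` Z = UNIV"
    show "\<forall>v \<in> V.span {a, b} - {0}. \<exists>z\<in>Z. v \<in> V.span {z}"
    proof
      fix v assume v: "v \<in> V.span {a, b} - {0}"
      obtain z where z: "z \<in> Z" "slope a b v = slope a b z"
        using surj by (metis UNIV_I imageE)
      have "z \<in> V.span {a, b}" "z \<noteq> 0" using z(1) Z unfolding proj_distinct_def by blast+
      then have "v \<in> V.span {z}" using parallel_if_slope_eq[OF ab _ _ _ z(2)] v by simp
      then show "\<exists>z\<in>Z. v \<in> V.span {z}" using z(1) by blast
    qed
  next
    assume cover: "\<forall>v \<in> V.span {a, b} - {0}. \<exists>z\<in>Z. v \<in> V.span {z}"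
    have "slope a b v \<in> slope a b ` Z" if v: "v \<in> V.span {a, b} - {0}" for v
    proof -
      obtain z where z: "z \<in> Z" "v \<in> V.span {z}" using cover v by blast
      then obtain c where c: "v = vscale c z" by (auto simp: V.span_singleton)
      then have "c \<noteq> 0" using v by (metis DiffD2 V.scale_zero_left insertI1)
      then have "slope a b v = slope a b z" using c slope_scale[OF ab] z(1) Z(1) by auto
      then show ?thesis using z(1) by blast
    qed
    then have "UNIV \<subseteq> slope a b ` Z" unfolding slope_surj[OF ab, symmetric] by blast
    then show "slope a b ` Z = UNIV" by blast
  qed
  finally show ?thesis .
qed

end

section \<open>Projective geometries\<close>

definition lead :: "(nat \<Rightarrow> 'f::zero) \<Rightarrow> nat" where
  "lead v = (LEAST i. v i \<noteq> 0)"

definition normalize_lead :: "(nat \<Rightarrow> 'f::field) \<Rightarrow> (nat \<Rightarrow> 'f)" where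
  "normalize_lead v = vscale (inverse (v (lead v))) v"

lemma lead_nonzero:
  fixes v :: "nat \<Rightarrow> 'f::zero"
  assumes "v \<noteq> 0" shows "v (lead v) \<noteq> 0"
proof -
  obtain i where "v i \<noteq> 0" using assms by (auto simp: fun_eq_iff)
  then show ?thesis unfolding lead_def by (rule LeastI)
qed

lemma lead_vscale: "c \<noteq> 0 \<Longrightarrow> lead (vscale c v) = lead v"
  by (simp add: lead_def)

lemma normalize_lead_vscale:
  fixes v :: "nat \<Rightarrow> 'f::field"
  assumes "c \<noteq> 0" shows "normalize_lead (vscale c v) = normalize_lead v"
  using assms by (simp add: normalize_lead_def lead_vscale fun_eq_iff)

lemma gnd_PG_iff:
  "v \<in> gnd (PG n TYPE('f::field)) \<longleftrightarrow> (\<forall>i. n < i \<longrightarrow> v i = 0) \<and> v \<noteq> 0 \<and> v (lead v) = 1"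
  by (auto simp: PG_def gnd_def lead_def fun_eq_iff)

lemma rk_PG: "finite X \<Longrightarrow> rk (PG n TYPE('f::field)) X = V.dim X"
  by (simp add: PG_def rk_def vrank_eq_dim)

lemma normalize_lead_in_PG:
  fixes v :: "nat \<Rightarrow> 'f::field"
  assumes "v \<noteq> 0" "\<And>i. n < i \<Longrightarrow> v i = 0"
  shows "normalize_lead v \<in> gnd (PG n TYPE('f))"
proof -
  have "v (lead v) \<noteq> 0" by (rule lead_nonzero[OF assms(1)])
  then have "lead (normalize_lead v) = lead v"
    unfolding normalize_lead_def by (simp add: lead_vscale)
  then show ?thesis
    using \<open>v (lead v) \<noteq> 0\<close> assms(2) by (auto simp: gnd_PG_iff normalize_lead_def fun_eq_iff)
qed

lemma normalize_lead_PG: "v \<in> gnd (PG n TYPE('f::field)) \<Longrightarrow> normalize_lead v = v"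
  by (simp add: gnd_PG_iff normalize_lead_def vscale_def)

lemma PG_eq_if_parallel:
  fixes u w :: "nat \<Rightarrow> 'f::field"
  assumes "u \<in> gnd (PG n TYPE('f))" "w \<in> gnd (PG n TYPE('f))" "u \<in> V.span {w}"
  shows "u = w"
proof -
  obtain c where c: "u = vscale c w" using assms(3) by (auto simp: V.span_singleton)
  have "c \<noteq> 0" using c assms(1) by (auto simp: gnd_PG_iff fun_eq_iff)
  then show ?thesis
    using assms(1,2) c normalize_lead_vscale[of c w] normalize_lead_PG by metis
qed

lemma proj_distinct_PG: "Z \<subseteq> gnd (PG n TYPE('f::field)) \<Longrightarrow> proj_distinct Z"
  unfolding proj_distinct_def using PG_eq_if_parallel gnd_PG_iff by blast

lemma independent_PG_pair:
  fixes u w :: "nat \<Rightarrow> 'f::field"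
  assumes "u \<in> gnd (PG n TYPE('f))" "w \<in> gnd (PG n TYPE('f))" "u \<noteq> w"
  shows "V.independent {u, w}"
proof -
  have "w \<noteq> 0" using assms(2) gnd_PG_iff by blast
  then show ?thesis using independent_pair_iff[of u w] PG_eq_if_parallel[OF assms(1,2)] assms(3) by blast
qed

lemma card_PG_line:
  fixes u w :: "nat \<Rightarrow> 'f::{field,finite}"
  assumes "u \<in> gnd (PG n TYPE('f))" "w \<in> gnd (PG n TYPE('f))" "u \<noteq> w"
  shows "card {z \<in> gnd (PG n TYPE('f)). z \<in> V.span {u, w}} = Suc CARD('f)"
proof -
  let ?Z = "{z \<in> gnd (PG n TYPE('f)). z \<in> V.span {u, w}}"
  note uw = independent_PG_pair[OF assms] assms(3)
  have cover: "\<exists>z\<in>?Z. v \<in> V.span {z}" if v: "v \<in> V.span {u, w} - {0}" for v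
  proof -
    obtain \<alpha> \<beta> where "v = vscale \<alpha> u + vscale \<beta> w" using v span_pair_iff by blast
    then have "\<forall>i. n < i \<longrightarrow> v i = 0" using assms(1,2) by (simp add: gnd_PG_iff)
    then have "normalize_lead v \<in> gnd (PG n TYPE('f))"
      using v normalize_lead_in_PG by blast
    moreover have "normalize_lead v \<in> V.span {u, w}"
      using v by (simp add: normalize_lead_def V.span_scale)
    moreover have "v \<in> V.span {normalize_lead v}"
    proof -
      have "v (lead v) \<noteq> 0" using v lead_nonzero by blast
      then have "v = vscale (v (lead v)) (normalize_lead v)"
        by (simp add: normalize_lead_def fun_eq_iff)
      then show ?thesis unfolding V.span_singleton by blast
    qed
    ultimately show ?thesis by blast
  qed
  have "proj_distinct ?Z" by (rule proj_distinct_PG) blast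
  moreover have "?Z \<subseteq> V.span {u, w}" by blast
  ultimately show ?thesis using card_proj_distinct_eq_iff[OF uw] cover by blast
qed

section \<open>Finite linear spaces\<close>

locale finite_linear_space =
  fixes points :: "'a set" and lines :: "'a set set"
  assumes finite_points: "finite points"
    and line_subset: "l \<in> lines \<Longrightarrow> l \<subseteq> points"
    and two_le_card_line: "l \<in> lines \<Longrightarrow> 2 \<le> card l"
    and ex1_line: "x \<in> points \<Longrightarrow> y \<in> points \<Longrightarrow> x \<noteq> y \<Longrightarrow>
                    \<exists>!l. l \<in> lines \<and> x \<in> l \<and> y \<in> l"
begin

definition pencil :: "'a \<Rightarrow> 'a set set" where
  "pencil x = {l \<in> lines. x \<in> l}"

lemma finite_lines: "finite lines"
  using finite_subset[of lines "Pow points"] finite_points line_subset by blast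

lemma finite_line: "l \<in> lines \<Longrightarrow> finite l"
  using finite_subset[OF line_subset finite_points] .

lemma line_eqI:
  assumes "l \<in> lines" "l' \<in> lines" "x \<in> l" "y \<in> l" "x \<in> l'" "y \<in> l'" "x \<noteq> y"
  shows "l = l'"
  using ex1_line[of x y] assms line_subset[OF assms(1)] by blast

lemma card_points_eq_sum_pencil:
  assumes "x \<in> points"
  shows "card points = Suc (\<Sum>l\<in>pencil x. card l - 1)"
proof -
  have partition: "points - {x} = (\<Union>l\<in>pencil x. l - {x})"
  proof
    show "points - {x} \<subseteq> (\<Union>l\<in>pencil x. l - {x})"
    proof
      fix y assume "y \<in> points - {x}"
      then obtain l where "l \<in> lines" "x \<in> l" "y \<in> l" using ex1_line[OF assms, of y] by auto
      then show "y \<in> (\<Union>l\<in>pencil x. l - {x})" using \<open>y \<in> points - {x}\<close> by (auto simp: pencil_def)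
    qed
    show "(\<Union>l\<in>pencil x. l - {x}) \<subseteq> points - {x}" using line_subset by (auto simp: pencil_def)
  qed
  have disjoint: "(l - {x}) \<inter> (l' - {x}) = {}"
    if "l \<in> pencil x" "l' \<in> pencil x" "l \<noteq> l'" for l l'
  proof (rule ccontr)
    assume "(l - {x}) \<inter> (l' - {x}) \<noteq> {}"
    then obtain y where "y \<in> l" "y \<in> l'" "y \<noteq> x" by blast
    then show False using line_eqI[of l l' x y] that by (auto simp: pencil_def)
  qed
  have "card (points - {x}) = (\<Sum>l\<in>pencil x. card (l - {x}))"
    unfolding partition
    by (rule card_UN_disjoint) (use finite_lines finite_line disjoint in \<open>auto simp: pencil_def\<close>)
  also have "\<dots> = (\<Sum>l\<in>pencil x. card l - 1)"
    by (rule sum.cong) (auto simp: pencil_def finite_line)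
  finally show ?thesis
    using assms finite_points by (metis card_Suc_Diff1)
qed

text \<open>The lines joining \<open>p\<close> to the points of \<open>L\<close> are distinct, so they exhaust the
  pencil of \<open>p\<close>.\<close>

lemma pencil_meets_line:
  assumes L: "L \<in> lines" and p: "p \<in> points" "p \<notin> L" "card (pencil p) \<le> card L"
    and l: "l \<in> pencil p"
  shows "l \<inter> L \<noteq> {}"
proof -
  have "\<forall>u\<in>L. \<exists>m. m \<in> lines \<and> p \<in> m \<and> u \<in> m"
  proof
    fix u assume "u \<in> L"
    then have "u \<in> points" "u \<noteq> p" using line_subset[OF L] p(2) by auto
    then show "\<exists>m. m \<in> lines \<and> p \<in> m \<and> u \<in> m" using ex1_line[OF p(1)] by blast
  qed
  then obtain join where join: "\<And>u. u \<in> L \<Longrightarrow> join u \<in> lines \<and> p \<in> join u \<and> u \<in> join u"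
    by (metis (no_types))
  have "inj_on join L"
  proof (rule inj_onI, rule ccontr)
    fix u u' assume u: "u \<in> L" "u' \<in> L" "join u = join u'" "u \<noteq> u'"
    then have "join u = L" using line_eqI[of "join u" L u u'] join L by metis
    then show False using join[OF u(1)] p(2) by simp
  qed
  moreover have "join ` L \<subseteq> pencil p" using join by (auto simp: pencil_def)
  moreover have "finite (pencil p)" using finite_lines by (simp add: pencil_def)
  ultimately have "join ` L = pencil p" using p(3) card_image card_seteq by metis
  then obtain u where "u \<in> L" "l = join u" using l by blast
  then show ?thesis using join by blast
qed

lemma card_Int_line_eq_1:
  assumes L: "L \<in> lines" "\<And>p. p \<in> points \<Longrightarrow> card (pencil p) \<le> card L"
    and l: "l \<in> lines" "l \<noteq> L"
  shows "card (l \<inter> L) = 1"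
proof -
  have fin: "finite (l \<inter> L)" using finite_line[OF L(1)] by simp
  have "\<forall>u\<in>l \<inter> L. \<forall>v\<in>l \<inter> L. u = v"
    using line_eqI[OF l(1) L(1)] l(2) by blast
  then have le1: "card (l \<inter> L) \<le> 1" using card_le_Suc0_iff_eq[OF fin] by simp
  have "l \<inter> L \<noteq> {}"
  proof
    assume disj: "l \<inter> L = {}"
    obtain p where p: "p \<in> l" using two_le_card_line[OF l(1)] by fastforce
    then have "p \<in> points" "p \<notin> L" using line_subset[OF l(1)] disj by auto
    then show False using pencil_meets_line[OF L(1) _ _ L(2)] l(1) p disj by (auto simp: pencil_def)
  qed
  then have "card (l \<inter> L) \<noteq> 0" using fin by simp
  then show ?thesis using le1 by linarith
qed

end

lemma double_count_equation_unsolvable: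
  fixes q a :: nat
  assumes "3 \<le> q" "1 \<le> a" "a \<le> q"
  shows "(q + 2 + a * (q - 1)) * a \<noteq> (q + 1) * (1 + (q + 1) * (a - 1))"
proof
  obtain m where m: "q = Suc m" using assms(1) by (cases q) auto
  obtain k where k: "a = Suc k" using assms(2) by (cases a) auto
  assume "(q + 2 + a * (q - 1)) * a = (q + 1) * (1 + (q + 1) * (a - 1))"
  then have "(m + 3 + (k + 1) * m) * (k + 1) = (m + 2) * (1 + (m + 2) * k)"
    by (simp add: m k algebra_simps)
  then have "(int m + 3 + (int k + 1) * int m) * (int k + 1) = (int m + 2) * (1 + (int m + 2) * int k)"
    by (metis (mono_tags) of_nat_add of_nat_mult of_nat_numeral of_nat_1 of_nat_eq_iff)
  then have "(int k - int m - 1) * (int m * (int k + 1) - (int m + 1)) = 0" by algebra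
  moreover have "int k - int m - 1 \<noteq> 0" using assms(3) by (simp add: m k)
  moreover have "int m * (int k + 1) \<noteq> int m + 1"
  proof (cases k)
    case (Suc j)
    then have "int m * 2 \<le> int m * (int k + 1)" by (intro mult_left_mono) auto
    moreover have "2 \<le> m" using assms(1) m by simp
    ultimately show ?thesis by linarith
  qed simp
  ultimately show False by simp
qed

context finite_linear_space
begin

context
  fixes q :: nat
  assumes card_line: "\<And>l. l \<in> lines \<Longrightarrow> card l = 2 \<or> card l = Suc q"
    and card_pencil: "\<And>x. x \<in> points \<Longrightarrow> card (pencil x) = Suc q"
begin

lemma card_points_eq:
  assumes "x \<in> points"
  shows "card points = q + 2 + card {l \<in> pencil x. card l = Suc q} * (q - 1)"
proof -
  have fin: "finite (pencil x)" using finite_lines by (simp add: pencil_def)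
  have "(\<Sum>l\<in>pencil x. card l - 1) = (\<Sum>l\<in>pencil x. 1 + (if card l = Suc q then q - 1 else 0))"
  proof (rule sum.cong[OF HOL.refl])
    fix l assume "l \<in> pencil x"
    then have "card l = 2 \<or> card l = Suc q" "2 \<le> card l"
      using card_line two_le_card_line by (auto simp: pencil_def)
    then show "card l - 1 = 1 + (if card l = Suc q then q - 1 else 0)" by auto
  qed
  also have "\<dots> = card (pencil x) + (\<Sum>l\<in>pencil x. if card l = Suc q then q - 1 else 0)"
    by (simp only: sum.distrib) simp
  also have "(\<Sum>l\<in>pencil x. if card l = Suc q then q - 1 else 0) =
             card {l \<in> pencil x. card l = Suc q} * (q - 1)"
    using sum.inter_filter[OF fin, of "\<lambda>_. q - 1" "\<lambda>l. card l = Suc q"] by simp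
  finally show ?thesis
    using card_points_eq_sum_pencil[OF assms] card_pencil[OF assms] by simp
qed

lemma card_long_pencil_eq:
  assumes "2 \<le> q" "x \<in> points" "y \<in> points"
  shows "card {l \<in> pencil x. card l = Suc q} = card {l \<in> pencil y. card l = Suc q}"
  using card_points_eq[OF assms(2)] card_points_eq[OF assms(3)] assms(1) by simp

lemma incidences_long_lines:
  assumes "\<And>p. p \<in> points \<Longrightarrow> card {l \<in> pencil p. card l = Suc q} = \<alpha>"
  shows "card points * \<alpha> = Suc q * card {l \<in> lines. card l = Suc q}"
proof -
  have "(\<Sum>p\<in>points. card {l \<in> {l \<in> lines. card l = Suc q}. p \<in> l}) =
        Suc q * card {l \<in> lines. card l = Suc q}"
    using line_subset finite_lines by (intro sum_multicount[OF finite_points])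
      (auto simp: Int_absorb1 simp flip: Int_def)
  moreover have "{l \<in> {l \<in> lines. card l = Suc q}. p \<in> l} = {l \<in> pencil p. card l = Suc q}" for p
    by (auto simp: pencil_def)
  ultimately show ?thesis using assms by simp
qed

text \<open>Every other \<open>(q + 1)\<close>-point line meets \<open>L\<close> in exactly one point.\<close>

lemma card_long_lines_eq:
  assumes L: "L \<in> lines" "card L = Suc q"
    and \<alpha>: "\<And>p. p \<in> points \<Longrightarrow> card {l \<in> pencil p. card l = Suc q} = \<alpha>"
  shows "card {l \<in> lines. card l = Suc q} = 1 + (q + 1) * (\<alpha> - 1)"
proof -
  define long where "long = {l \<in> lines. card l = Suc q}"
  have fin: "finite long" using finite_lines by (simp add: long_def)
  have "L \<in> long" using L by (simp add: long_def)
  have "(\<Sum>p\<in>L. card {l \<in> long - {L}. p \<in> l}) = 1 * card (long - {L})"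
  proof (intro sum_multicount[OF finite_line[OF L(1)]] ballI)
    show "finite (long - {L})" using fin by simp
    fix l assume "l \<in> long - {L}"
    then have "card (l \<inter> L) = 1"
      using card_Int_line_eq_1[OF L(1) _ , of l] card_pencil L(2) by (simp add: long_def)
    then show "card {p \<in> L. p \<in> l} = 1" by (simp add: Int_commute Int_def)
  qed
  moreover have "card {l \<in> long - {L}. p \<in> l} = \<alpha> - 1" if "p \<in> L" for p
  proof -
    have "{l \<in> long - {L}. p \<in> l} = {l \<in> pencil p. card l = Suc q} - {L}"
      by (auto simp: long_def pencil_def)
    moreover have "L \<in> {l \<in> pencil p. card l = Suc q}" using L that by (simp add: pencil_def)
    moreover have "p \<in> points" using that line_subset[OF L(1)] by blast
    ultimately show ?thesis using \<alpha> finite_lines by (simp add: card_Diff_singleton pencil_def)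
  qed
  ultimately have "Suc q * (\<alpha> - 1) = card long - 1"
    using L(2) fin \<open>L \<in> long\<close> by (simp add: card_Diff_singleton)
  moreover have "card long \<noteq> 0" using \<open>L \<in> long\<close> fin by auto
  ultimately show ?thesis unfolding long_def by simp
qed

text \<open>Every point lies on the same number \<open>\<alpha>\<close> of \<open>(q + 1)\<close>-point lines, so two ways
  of counting their incidences give an equation in \<open>q\<close> and \<open>\<alpha>\<close> without admissible
  solutions.\<close>

lemma all_lines_short:
  assumes q: "3 \<le> q" and short: "l\<^sub>0 \<in> lines" "card l\<^sub>0 = 2"
  shows "\<forall>l\<in>lines. card l = 2"
proof (rule ccontr)
  assume "\<not> (\<forall>l\<in>lines. card l = 2)"
  then obtain L where L: "L \<in> lines" "card L = Suc q" using card_line by blast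
  obtain a where a: "a \<in> l\<^sub>0" using short two_le_card_line by fastforce
  then have aP: "a \<in> points" using line_subset[OF short(1)] by blast
  define \<alpha> where "\<alpha> = card {l \<in> pencil a. card l = Suc q}"
  have \<alpha>: "card {l \<in> pencil p. card l = Suc q} = \<alpha>" if "p \<in> points" for p
    using card_long_pencil_eq[OF _ that aP] q unfolding \<alpha>_def by simp
  have "{l \<in> pencil a. card l = Suc q} \<subseteq> pencil a - {l\<^sub>0}"
    using short q by auto
  then have "\<alpha> \<le> card (pencil a - {l\<^sub>0})"
    unfolding \<alpha>_def using finite_lines by (intro card_mono) (auto simp: pencil_def)
  also have "\<dots> = q" using card_pencil[OF aP] short a finite_lines by (simp add: pencil_def)
  finally have \<alpha>_le: "\<alpha> \<le> q" .
  obtain u where u: "u \<in> L" using L two_le_card_line by fastforce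
  then have "L \<in> {l \<in> pencil u. card l = Suc q}" using L by (simp add: pencil_def)
  moreover have "finite {l \<in> pencil u. card l = Suc q}" using finite_lines by (simp add: pencil_def)
  moreover have "u \<in> points" using u line_subset[OF L(1)] by blast
  ultimately have "1 \<le> \<alpha>" using \<alpha> card_0_eq[of "{l \<in> pencil u. card l = Suc q}"] by force
  then show False
    using incidences_long_lines[OF \<alpha>] card_long_lines_eq[OF L \<alpha>] card_points_eq[OF aP]
      double_count_equation_unsolvable[OF q _ \<alpha>_le]
    unfolding \<alpha>_def by (simp add: mult.commute)
qed

lemma card_points_if_all_lines_short:
  assumes "\<forall>l\<in>lines. card l = 2" "x \<in> points" "q \<noteq> 1"
  shows "card points = q + 2"
proof -
  have none: "{l \<in> pencil x. card l = Suc q} = {}" using assms(1,3) by (auto simp: pencil_def)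
  show ?thesis using card_points_eq[OF assms(2), unfolded none] by simp
qed

end

end

section \<open>Simple representable matroids\<close>

lemma gnd_restrict [simp]: "gnd (restrict M X) = X"
  by (simp add: restrict_def gnd_def)

lemma rk_restrict [simp]: "rk (restrict M X) = rk M"
  by (simp add: restrict_def rk_def)

lemma gnd_uniform: "gnd (uniform k n) = {0..<n}"
  by (simp add: uniform_def gnd_def)

lemma rk_uniform: "rk (uniform k n) X = min k (card X)"
  by (simp add: uniform_def rk_def)

lemma iso_restrict_uniform:
  assumes "finite X" "\<And>Y. Y \<subseteq> X \<Longrightarrow> rk M Y = min k (card Y)"
  shows "iso (restrict M X) (uniform k (card X))"
proof -
  obtain h where h: "bij_betw h X {0..<card X}" using ex_bij_betw_finite_nat[OF assms(1)] by blast
  have "min k (card (h ` Y)) = rk M Y" if "Y \<subseteq> X" for Y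
    using assms(2) card_image[OF inj_on_subset[OF bij_betw_imp_inj_on[OF h] that]] that by simp
  then show ?thesis
    unfolding iso_def gnd_restrict rk_restrict gnd_uniform rk_uniform using h by blast
qed

locale simple_rep =
  fixes M :: "'a matroid" and \<phi> :: "'a \<Rightarrow> nat \<Rightarrow> 'f::{field,finite}"
  assumes finite_gnd: "finite (gnd M)"
    and simple: "simple M"
    and rk_eq_dim: "\<And>X. X \<subseteq> gnd M \<Longrightarrow> rk M X = V.dim (\<phi> ` X)"
begin

abbreviation E :: "'a set" where "E \<equiv> gnd M"

lemma phi_nonzero:
  assumes "x \<in> E" shows "\<phi> x \<noteq> 0"
proof
  assume "\<phi> x = 0"
  have "V.independent ({} :: (nat \<Rightarrow> 'f) set)" by (rule V.independent_empty)
  then have "V.dim {0 :: nat \<Rightarrow> 'f} = 0"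
    using V.dim_eq_card[of "{}" "{0}"] V.span_insert_0[of "{}"] by simp
  moreover have "rk M {x} = 1" using simple assms by (simp add: simple_def)
  ultimately show False using rk_eq_dim[of "{x}"] assms \<open>\<phi> x = 0\<close> by simp
qed

lemma phi_not_parallel:
  assumes "x \<in> E" "y \<in> E" "x \<noteq> y"
  shows "\<phi> x \<notin> V.span {\<phi> y}"
proof
  assume "\<phi> x \<in> V.span {\<phi> y}"
  then have "V.dim {\<phi> x, \<phi> y} \<le> card {\<phi> y}" by (intro V.dim_le_card) (auto intro: V.span_base)
  moreover have "V.dim {\<phi> x, \<phi> y} = 2" using simple rk_eq_dim[of "{x, y}"] assms by (simp add: simple_def)
  ultimately show False by simp
qed

lemma independent_phi_pair:
  assumes "x \<in> E" "y \<in> E" "x \<noteq> y"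
  shows "V.independent {\<phi> x, \<phi> y}" "\<phi> x \<noteq> \<phi> y"
  using independent_pair_iff phi_not_parallel[OF assms] phi_nonzero[OF assms(2)] by blast+

lemma independent_phi_triple:
  assumes "x \<in> E" "y \<in> E" "x \<noteq> y" "\<phi> z \<notin> V.span {\<phi> x, \<phi> y}"
  shows "V.independent {\<phi> x, \<phi> y, \<phi> z}" "card {\<phi> x, \<phi> y, \<phi> z} = 3"
proof -
  have "\<phi> x \<in> V.span {\<phi> x, \<phi> y}" "\<phi> y \<in> V.span {\<phi> x, \<phi> y}"
    by (auto intro: V.span_base)
  then have "\<phi> z \<noteq> \<phi> x" "\<phi> z \<noteq> \<phi> y" using assms(4) by auto
  then show "card {\<phi> x, \<phi> y, \<phi> z} = 3" using independent_phi_pair(2)[OF assms(1-3)] by simp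
  show "V.independent {\<phi> x, \<phi> y, \<phi> z}"
    using V.independent_insertI[OF assms(4) independent_phi_pair(1)[OF assms(1-3)]]
    by (simp add: insert_commute)
qed

lemma inj_on_phi: "inj_on \<phi> E"
  using independent_phi_pair(2) by (meson inj_onI)

lemma proj_distinct_phi:
  assumes "X \<subseteq> E" shows "proj_distinct (\<phi> ` X)"
  unfolding proj_distinct_def
proof (intro conjI ballI impI)
  show "0 \<notin> \<phi> ` X" using phi_nonzero assms by force
  fix u v assume "u \<in> \<phi> ` X" "v \<in> \<phi> ` X" "u \<in> V.span {v}"
  then show "u = v" using phi_not_parallel assms by blast
qed

lemma rk_le_2:
  assumes "X \<subseteq> E" "card X \<le> 2" shows "rk M X = card X"
proof -
  have "finite X" using assms(1) finite_gnd finite_subset by blast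
  consider "X = {}" | u where "X = {u}" | u v where "X = {u, v}" "u \<noteq> v"
    using assms(2) \<open>finite X\<close>
    by (metis card_1_singletonE card_2_iff card_0_eq le_Suc_eq numeral_2_eq_2 le_zero_eq One_nat_def)
  then show ?thesis
  proof cases
    case 1
    have "V.independent ({} :: (nat \<Rightarrow> 'f) set)" by (rule V.independent_empty)
    then show ?thesis using rk_eq_dim[of "{}"] 1 by (simp add: V.dim_eq_card_independent)
  qed (use simple assms(1) in \<open>auto simp: simple_def\<close>)
qed

definition line :: "'a \<Rightarrow> 'a \<Rightarrow> 'a set" where
  "line x y = {z \<in> E. \<phi> z \<in> V.span {\<phi> x, \<phi> y}}"

lemma line_subset: "line x y \<subseteq> E"
  by (auto simp: line_def)

lemma finite_line: "finite (line x y)"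
  using finite_subset[OF line_subset finite_gnd] .

lemma mem_line: "x \<in> E \<Longrightarrow> y \<in> E \<Longrightarrow> x \<in> line x y \<and> y \<in> line x y"
  by (auto simp: line_def intro: V.span_base)

lemma line_eq:
  assumes "x \<in> E" "y \<in> E" "x \<noteq> y" "u \<in> line x y" "v \<in> line x y" "u \<noteq> v"
  shows "line u v = line x y"
proof -
  have "u \<in> E" "v \<in> E" using assms(4,5) line_subset by auto
  then have "V.span {\<phi> u, \<phi> v} = V.span {\<phi> x, \<phi> y}"
    using independent_phi_pair[OF assms(1-3)] independent_phi_pair[of u v] assms(4-6)
    by (intro span_eq_if_independent_card) (auto simp: line_def)
  then show ?thesis by (simp add: line_def)
qed

lemma card_line_bounds:
  assumes "x \<in> E" "y \<in> E" "x \<noteq> y"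
  shows "2 \<le> card (line x y)" "card (line x y) \<le> Suc CARD('f)"
proof -
  have "{x, y} \<subseteq> line x y" using mem_line[OF assms(1,2)] by auto
  from card_mono[OF finite_line this] show "2 \<le> card (line x y)" using assms(3) by simp
  have "card (\<phi> ` line x y) \<le> Suc CARD('f)"
    using independent_phi_pair[OF assms] proj_distinct_phi[OF line_subset]
    by (intro card_proj_distinct_le) (auto simp: line_def)
  then show "card (line x y) \<le> Suc CARD('f)"
    using card_image[OF inj_on_subset[OF inj_on_phi line_subset]] by simp
qed

lemma full_line_covers:
  assumes "x \<in> E" "y \<in> E" "x \<noteq> y" "card (line x y) = Suc CARD('f)"
    and "v \<in> V.span {\<phi> x, \<phi> y}" "v \<noteq> 0"
  shows "\<exists>z\<in>line x y. v \<in> V.span {\<phi> z}"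
proof -
  have "card (\<phi> ` line x y) = Suc CARD('f)"
    using assms(4) card_image[OF inj_on_subset[OF inj_on_phi line_subset]] by simp
  then show ?thesis
    using card_proj_distinct_eq_iff[OF independent_phi_pair[OF assms(1-3)], of "\<phi> ` line x y"]
      proj_distinct_phi[OF line_subset] assms(5,6)
    by (auto simp: line_def)
qed

lemma rk_subset_line:
  assumes "x \<in> E" "y \<in> E" "x \<noteq> y" "X \<subseteq> line x y"
  shows "rk M X = min 2 (card X)"
proof -
  have XE: "X \<subseteq> E" using assms(4) line_subset by blast
  show ?thesis
  proof (cases "card X \<le> 2")
    case True
    then show ?thesis using rk_le_2[OF XE] by simp
  next
    case False
    then obtain u v where uv: "u \<in> X" "v \<in> X" "u \<noteq> v"
      by (metis card_le_Suc0_iff_eq finite_subset[OF assms(4) finite_line] le_SucI numeral_2_eq_2)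
    have uvE: "u \<in> E" "v \<in> E" using uv XE by auto
    have "\<phi> ` X \<subseteq> V.span {\<phi> u, \<phi> v}"
      using line_eq[OF assms(1-3), of u v] uv assms(4) by (auto simp: line_def)
    then have "V.dim (\<phi> ` X) = 2"
      using independent_phi_pair[OF uvE uv(3)] uv by (intro V.dim_unique[of "{\<phi> u, \<phi> v}"]) auto
    then show ?thesis using False rk_eq_dim[OF XE] by simp
  qed
qed

lemma is_flat_line:
  assumes "x \<in> E" "y \<in> E" "x \<noteq> y"
  shows "is_flat M (line x y)"
  unfolding is_flat_def
proof (intro conjI ballI line_subset)
  fix e assume e: "e \<in> E - line x y"
  have "rk M (line x y) = 2"
    using rk_subset_line[OF assms subset_refl] card_line_bounds(1)[OF assms] by simp
  moreover have "3 \<le> V.dim (\<phi> ` insert e (line x y))"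
  proof -
    have "\<phi> e \<notin> V.span {\<phi> x, \<phi> y}" using e by (simp add: line_def)
    note indep = independent_phi_triple[OF assms this]
    have "{\<phi> x, \<phi> y, \<phi> e} \<subseteq> \<phi> ` insert e (line x y)" using mem_line[OF assms(1,2)] by auto
    from card_le_dim[OF indep(1) this] show ?thesis using indep(2) finite_line by simp
  qed
  ultimately show "rk M (line x y) < rk M (insert e (line x y))"
    using rk_eq_dim[of "insert e (line x y)"] e line_subset by simp
qed

lemma line_induced_minor:
  assumes "x \<in> E" "y \<in> E" "x \<noteq> y"
  shows "induced_minor M (restrict M (line x y))"
    and "iso (restrict M (line x y)) (uniform 2 (card (line x y)))"
  using induced_minor.flat[OF induced_minor.refl is_flat_line[OF assms]]
    iso_restrict_uniform[OF finite_line rk_subset_line[OF assms]] by auto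

lemma line_sizes_cases:
  obtains "\<forall>x\<in>E. \<forall>y\<in>E. x \<noteq> y \<longrightarrow> card (line x y) = Suc CARD('f)"
  | x y where "x \<in> E" "y \<in> E" "x \<noteq> y" "3 \<le> card (line x y)" "card (line x y) \<le> CARD('f)"
  | x y where "x \<in> E" "y \<in> E" "x \<noteq> y" "card (line x y) = 2"
      "\<forall>u\<in>E. \<forall>v\<in>E. u \<noteq> v \<longrightarrow> card (line u v) = 2 \<or> card (line u v) = Suc CARD('f)"
proof -
  consider "\<forall>x\<in>E. \<forall>y\<in>E. x \<noteq> y \<longrightarrow> card (line x y) = Suc CARD('f)"
    | x y where "x \<in> E" "y \<in> E" "x \<noteq> y" "card (line x y) \<noteq> Suc CARD('f)"
    by blast
  then show ?thesis
  proof cases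
    case (2 x y)
    show ?thesis
    proof (cases "\<exists>u\<in>E. \<exists>v\<in>E. u \<noteq> v \<and> 3 \<le> card (line u v) \<and> card (line u v) \<le> CARD('f)")
      case True
      then show ?thesis using that(2) by blast
    next
      case False
      then have "\<forall>u\<in>E. \<forall>v\<in>E. u \<noteq> v \<longrightarrow> card (line u v) = 2 \<or> card (line u v) = Suc CARD('f)"
        using card_line_bounds by fastforce
      then show ?thesis using that(3)[OF 2(1-3)] 2 by blast
    qed
  qed (rule that(1))
qed

lemma exists_off_line:
  assumes "3 \<le> rk M E" "x \<in> E" "y \<in> E"
  obtains z where "z \<in> E" "\<phi> z \<notin> V.span {\<phi> x, \<phi> y}"
proof -
  have "V.dim (\<phi> ` E) \<le> card {\<phi> x, \<phi> y}" if "\<phi> ` E \<subseteq> V.span {\<phi> x, \<phi> y}"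
    using V.dim_le_card[OF that] by simp
  moreover have "card {\<phi> x, \<phi> y} \<le> 2" by (simp add: card_insert_if)
  ultimately have "\<not> \<phi> ` E \<subseteq> V.span {\<phi> x, \<phi> y}" using assms(1) rk_eq_dim[of E] by auto
  then show ?thesis using that by blast
qed

end

lemma simple_rep_if_representable:
  assumes "matroid M" "simple M" "representable_over TYPE('f) M"
  obtains \<phi> :: "'a \<Rightarrow> nat \<Rightarrow> 'f::{field,finite}" where "simple_rep M \<phi>"
proof -
  obtain \<phi> :: "'a \<Rightarrow> nat \<Rightarrow> 'f" where \<phi>: "\<And>X. X \<subseteq> gnd M \<Longrightarrow> rk M X = vrank \<phi> X"
    using assms(3) unfolding representable_over_def by blast
  have fin: "finite (gnd M)" using assms(1) by (simp add: matroid_def)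
  have "rk M X = V.dim (\<phi> ` X)" if "X \<subseteq> gnd M" for X
    using \<phi>[OF that] vrank_eq_dim[OF finite_subset[OF that fin]] by simp
  then have "simple_rep M \<phi>" using fin assms(2) by unfold_locales
  then show ?thesis by (rule that)
qed


section \<open>Coordinates\<close>

definition supported :: "nat \<Rightarrow> (nat \<Rightarrow> 'f::zero) set" where
  "supported r = {w. \<forall>i. r \<le> i \<longrightarrow> w i = 0}"

definition lincomb :: "(nat \<Rightarrow> nat \<Rightarrow> 'f::field) \<Rightarrow> nat \<Rightarrow> (nat \<Rightarrow> 'f) \<Rightarrow> (nat \<Rightarrow> 'f)" where
  "lincomb b r w = (\<Sum>i<r. vscale (w i) (b i))"

interpretation VV: vector_space_pair "vscale :: 'f::field \<Rightarrow> _" "vscale :: 'f \<Rightarrow> _" ..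

lemma subspace_supported: "V.subspace (supported r)"
  by (auto simp: V.subspace_def supported_def)

lemma linear_lincomb: "Vector_Spaces.linear vscale vscale (lincomb b r)"
  unfolding linear_iff
  by (simp add: V.vector_space_axioms lincomb_def V.scale_left_distrib sum.distrib
      V.scale_sum_right V.scale_scale)

context
  fixes b :: "nat \<Rightarrow> nat \<Rightarrow> 'f::field" and r :: nat and B :: "(nat \<Rightarrow> 'f) set"
  assumes b: "bij_betw b {..<r} B" and B: "V.independent B"
begin

lemma lincomb_eq_sum_basis:
  "lincomb b r w = (\<Sum>v\<in>B. vscale (w (the_inv_into {..<r} b v)) v)"
proof -
  have "(\<Sum>v\<in>B. vscale (w (the_inv_into {..<r} b v)) v) =
        (\<Sum>i<r. vscale (w (the_inv_into {..<r} b (b i))) (b i))"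
    by (rule sum.reindex_bij_betw[OF b, symmetric])
  also have "\<dots> = lincomb b r w"
    unfolding lincomb_def
  proof (rule sum.cong[OF HOL.refl])
    fix i assume "i \<in> {..<r}"
    then have "the_inv_into {..<r} b (b i) = i"
      by (rule the_inv_into_f_f[OF bij_betw_imp_inj_on[OF b]])
    then show "vscale (w (the_inv_into {..<r} b (b i))) (b i) = vscale (w i) (b i)" by simp
  qed
  finally show ?thesis ..
qed

lemma inj_on_lincomb: "inj_on (lincomb b r) (supported r)"
proof -
  have "w = 0" if w: "w \<in> supported r" "lincomb b r w = 0" for w
  proof (rule ext)
    fix i
    show "w i = 0 i"
    proof (cases "i < r")
      case True
      have "finite B" using b bij_betw_finite by blast
      then have "\<forall>v\<in>B. w (the_inv_into {..<r} b v) = 0"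
        using B w(2) V.dependent_finite[of B] by (auto simp: lincomb_eq_sum_basis)
      moreover have "b i \<in> B" "the_inv_into {..<r} b (b i) = i"
        using b True by (auto simp: bij_betw_def the_inv_into_f_f)
      ultimately show ?thesis by (metis zero_fun_def)
    qed (use w(1) in \<open>simp add: supported_def\<close>)
  qed
  then show ?thesis
    using VV.linear_inj_on_iff_eq_0[OF linear_lincomb subspace_supported] by blast
qed

lemma lincomb_image_supported: "lincomb b r ` supported r = V.span B"
proof
  have "b i \<in> B" if "i < r" for i using b that by (auto simp: bij_betw_def)
  then show "lincomb b r ` supported r \<subseteq> V.span B"
    by (auto simp: lincomb_def intro!: V.span_sum V.span_scale intro: V.span_base)
  show "V.span B \<subseteq> lincomb b r ` supported r"
  proof
    fix v assume "v \<in> V.span B"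
    then obtain u where u: "v = (\<Sum>x\<in>B. vscale (u x) x)"
      using V.span_finite[OF bij_betw_finite[THEN iffD1, OF b]] by auto
    define w where "w = (\<lambda>i. if i < r then u (b i) else 0)"
    have "lincomb b r w = v"
      unfolding u lincomb_eq_sum_basis w_def
      using b by (intro sum.cong) (auto simp: bij_betw_def f_the_inv_into_f the_inv_into_f_f)
    moreover have "w \<in> supported r" by (simp add: supported_def w_def)
    ultimately show "v \<in> lincomb b r ` supported r" by blast
  qed
qed

end

lemma dim_image_normalize_lead:
  assumes "finite S" "0 \<notin> S"
  shows "V.dim (normalize_lead ` S) = V.dim S"
proof -
  have "normalize_lead ` S = (\<lambda>v. vscale (inverse (v (lead v))) v) ` S"
    by (simp add: normalize_lead_def)
  also have "V.span \<dots> = V.span S"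
  proof (rule V.span_image_scale[OF assms(1)])
    fix v assume "v \<in> S"
    then have "v \<noteq> 0" using assms(2) by blast
    then show "inverse (v (lead v)) \<noteq> 0" using lead_nonzero by simp
  qed
  finally show ?thesis by (metis V.dim_span)
qed

context simple_rep
begin

lemma span_covered_if_lines_full:
  assumes full: "\<And>x y. x \<in> E \<Longrightarrow> y \<in> E \<Longrightarrow> x \<noteq> y \<Longrightarrow> card (line x y) = Suc CARD('f)"
    and "v \<in> V.span (\<phi> ` E)" "v \<noteq> 0"
  shows "\<exists>x\<in>E. v \<in> V.span {\<phi> x}"
proof -
  have "v \<noteq> 0 \<longrightarrow> (\<exists>x\<in>E. v \<in> V.span {\<phi> x})"
    using assms(2)
  proof (induction rule: V.span_induct_alt)
    case (step c w y)
    obtain x where x: "x \<in> E" "w = \<phi> x" using step.hyps by blast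
    obtain x' where x': "x' \<in> E" "y \<in> V.span {\<phi> x'}"
      using step.IH x(1) V.span_zero by blast
    have v: "vscale c w + y \<in> V.span {\<phi> x, \<phi> x'}"
      using x(2) x'(2) V.span_mono[of "{\<phi> x'}" "{\<phi> x, \<phi> x'}"]
      by (intro V.span_add V.span_scale) (auto intro: V.span_base)
    show ?case
    proof
      assume nz: "vscale c w + y \<noteq> 0"
      show "\<exists>z\<in>E. vscale c w + y \<in> V.span {\<phi> z}"
      proof (cases "x = x'")
        case True
        then show ?thesis using v x(1) by (metis insert_absorb2)
      next
        case False
        then show ?thesis
          using full_line_covers[OF x(1) x'(1) False full[OF x(1) x'(1) False] v nz] line_subset
          by blast
      qed
    qed
  qed simp
  then show ?thesis using assms(3) by blast
qed

lemma exists_coordinates: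
  obtains b :: "nat \<Rightarrow> nat \<Rightarrow> 'f" and c :: "'a \<Rightarrow> nat \<Rightarrow> 'f"
  where "inj_on (lincomb b (rk M E)) (supported (rk M E))"
    and "lincomb b (rk M E) ` supported (rk M E) \<subseteq> V.span (\<phi> ` E)"
    and "\<And>x. x \<in> E \<Longrightarrow> c x \<in> supported (rk M E) \<and> lincomb b (rk M E) (c x) = \<phi> x"
proof -
  obtain B where B: "B \<subseteq> \<phi> ` E" "V.independent B" "\<phi> ` E \<subseteq> V.span B" "card B = V.dim (\<phi> ` E)"
    by (rule V.basis_exists)
  have "finite B" using B(1) finite_gnd finite_subset by blast
  then obtain b where b: "bij_betw b {..<rk M E} B"
    using ex_bij_betw_nat_finite[of B] B(4) rk_eq_dim[of E] by (auto simp: atLeast0LessThan)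
  note image = lincomb_image_supported[OF b B(2)]
  have "\<forall>x\<in>E. \<exists>w. w \<in> supported (rk M E) \<and> lincomb b (rk M E) w = \<phi> x"
  proof
    fix x assume "x \<in> E"
    then have "\<phi> x \<in> lincomb b (rk M E) ` supported (rk M E)" using B(3) image by blast
    then show "\<exists>w. w \<in> supported (rk M E) \<and> lincomb b (rk M E) w = \<phi> x" by auto
  qed
  then obtain c where c: "\<And>x. x \<in> E \<Longrightarrow> c x \<in> supported (rk M E) \<and> lincomb b (rk M E) (c x) = \<phi> x"
    by (metis (no_types))
  have "lincomb b (rk M E) ` supported (rk M E) \<subseteq> V.span (\<phi> ` E)"
    unfolding image using B(1) by (rule V.span_mono)
  from that[OF inj_on_lincomb[OF b B(2)] this c] show ?thesis .
qed

lemma dim_normalized_coordinates: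
  assumes inj: "inj_on (lincomb b k) (supported k)"
    and c: "\<And>x. x \<in> E \<Longrightarrow> c x \<in> supported k \<and> lincomb b k (c x) = \<phi> x"
    and X: "X \<subseteq> E"
  shows "V.dim (normalize_lead ` c ` X) = V.dim (\<phi> ` X)"
proof -
  have "c x \<noteq> 0" if "x \<in> E" for x
    using c[OF that] phi_nonzero[OF that] VV.linear_0[OF linear_lincomb] by metis
  then have "V.dim (normalize_lead ` c ` X) = V.dim (c ` X)"
    using X finite_subset[OF X finite_gnd] by (intro dim_image_normalize_lead) auto
  moreover have "V.span (c ` X) \<subseteq> supported k"
    using c X by (intro V.span_minimal subspace_supported) auto
  then have "V.dim (lincomb b k ` c ` X) = V.dim (c ` X)"
    using inj by (intro VV.dim_image_eq_if_inj_on_span linear_lincomb) (auto intro: inj_on_subset)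
  moreover have "lincomb b k ` c ` X = \<phi> ` X" using c X by (force simp: image_image)
  ultimately show ?thesis by simp
qed

text \<open>The point \<open>x\<close> is sent to the normalised coordinate vector of \<open>\<phi> x\<close> with respect
  to a basis of the span of \<open>\<phi> ` E\<close>; \<open>L\<close> maps coordinate vectors back.\<close>

lemma PG_coordinates:
  assumes r: "rk M E = Suc n"
  obtains f :: "'a \<Rightarrow> nat \<Rightarrow> 'f" and L :: "(nat \<Rightarrow> 'f) \<Rightarrow> (nat \<Rightarrow> 'f)"
  where "\<And>x. x \<in> E \<Longrightarrow> f x \<in> gnd (PG n TYPE('f))"
    and "\<And>X. X \<subseteq> E \<Longrightarrow> V.dim (f ` X) = V.dim (\<phi> ` X)"
    and "\<And>p. p \<in> gnd (PG n TYPE('f)) \<Longrightarrow> L p \<in> V.span (\<phi> ` E) - {0}"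
    and "\<And>x p. x \<in> E \<Longrightarrow> p \<in> gnd (PG n TYPE('f)) \<Longrightarrow> L p \<in> V.span {\<phi> x} \<Longrightarrow> f x = p"
proof -
  obtain b c where inj: "inj_on (lincomb b (Suc n)) (supported (Suc n))"
    and span: "lincomb b (Suc n) ` supported (Suc n) \<subseteq> V.span (\<phi> ` E)"
    and c: "\<And>x. x \<in> E \<Longrightarrow> c x \<in> supported (Suc n) \<and> lincomb b (Suc n) (c x) = \<phi> x"
    using exists_coordinates r by metis
  let ?L = "lincomb b (Suc n)" and ?W = "supported (Suc n) :: (nat \<Rightarrow> 'f) set"
  define f where "f x = normalize_lead (c x)" for x
  have c0: "c x \<noteq> 0" if "x \<in> E" for x
    using c[OF that] phi_nonzero[OF that] VV.linear_0[OF linear_lincomb] by metis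
  have "f x \<in> gnd (PG n TYPE('f))" if "x \<in> E" for x
    using c[OF that] c0[OF that] unfolding f_def by (intro normalize_lead_in_PG) (auto simp: supported_def)
  moreover have "V.dim (f ` X) = V.dim (\<phi> ` X)" if "X \<subseteq> E" for X
    using dim_normalized_coordinates[OF inj c that] unfolding f_def image_image[symmetric] .
  moreover have "?L p \<in> V.span (\<phi> ` E) - {0}" if "p \<in> gnd (PG n TYPE('f))" for p
  proof -
    have "p \<in> ?W" "p \<noteq> 0" using that by (auto simp: gnd_PG_iff supported_def)
    then have "?L p \<noteq> 0"
      using inj VV.linear_inj_on_iff_eq_0[OF linear_lincomb subspace_supported] by blast
    moreover have "?L p \<in> V.span (\<phi> ` E)" using span \<open>p \<in> ?W\<close> by blast
    ultimately show ?thesis by blast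
  qed
  moreover have "f x = p"
    if x: "x \<in> E" and p: "p \<in> gnd (PG n TYPE('f))" and "?L p \<in> V.span {\<phi> x}" for x p
  proof -
    obtain k where "?L p = vscale k (\<phi> x)" using \<open>?L p \<in> V.span {\<phi> x}\<close> by (auto simp: V.span_singleton)
    then have "?L p = ?L (vscale k (c x))" using c[OF x] VV.linear_scale[OF linear_lincomb] by metis
    moreover have "vscale k (c x) \<in> ?W" using c[OF x] V.subspace_scale[OF subspace_supported] by blast
    moreover have "p \<in> ?W" "p \<noteq> 0" using p by (auto simp: gnd_PG_iff supported_def)
    ultimately have "p = vscale k (c x)" using inj by (auto dest: inj_onD)
    then show "f x = p"
      using \<open>p \<noteq> 0\<close> p normalize_lead_vscale[of k "c x"] normalize_lead_PG by (force simp: f_def)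
  qed
  ultimately show ?thesis by (rule that)
qed

lemma iso_PG_if_lines_full:
  assumes full: "\<And>x y. x \<in> E \<Longrightarrow> y \<in> E \<Longrightarrow> x \<noteq> y \<Longrightarrow> card (line x y) = Suc CARD('f)"
    and r: "rk M E = Suc n"
  shows "iso M (PG n TYPE('f))"
proof -
  obtain f L where f_PG: "\<And>x. x \<in> E \<Longrightarrow> f x \<in> gnd (PG n TYPE('f))"
    and dim: "\<And>X. X \<subseteq> E \<Longrightarrow> V.dim (f ` X) = V.dim (\<phi> ` X)"
    and L: "\<And>p. p \<in> gnd (PG n TYPE('f)) \<Longrightarrow> L p \<in> V.span (\<phi> ` E) - {0}"
    and f_eq: "\<And>x p. x \<in> E \<Longrightarrow> p \<in> gnd (PG n TYPE('f)) \<Longrightarrow> L p \<in> V.span {\<phi> x} \<Longrightarrow> f x = p"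
    using PG_coordinates[OF r] by metis
  have "inj_on f E"
  proof (rule inj_onI, rule ccontr)
    fix x y assume xy: "x \<in> E" "y \<in> E" "f x = f y" "x \<noteq> y"
    have "V.dim (f ` {x, y}) \<le> card {f x}" using xy(3) V.dim_le_card'[of "{f x}"] by simp
    moreover have "V.dim (\<phi> ` {x, y}) = 2" using rk_le_2[of "{x, y}"] rk_eq_dim[of "{x, y}"] xy by simp
    ultimately show False using dim[of "{x, y}"] xy by simp
  qed
  moreover have "p \<in> f ` E" if p: "p \<in> gnd (PG n TYPE('f))" for p
  proof -
    obtain x where "x \<in> E" "L p \<in> V.span {\<phi> x}"
      using span_covered_if_lines_full[OF full] L[OF p] by blast
    then show ?thesis using f_eq p by blast
  qed
  ultimately have "bij_betw f E (gnd (PG n TYPE('f)))"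
    using f_PG by (auto simp: bij_betw_def)
  moreover have "rk (PG n TYPE('f)) (f ` X) = rk M X" if "X \<subseteq> E" for X
    using dim[OF that] rk_eq_dim[OF that] rk_PG finite_gnd finite_subset that by (metis finite_imageI)
  ultimately show ?thesis unfolding iso_def by blast
qed

end

section \<open>Planes\<close>

context simple_rep
begin

lemma rk_contract_point:
  assumes "x \<in> E" "X \<subseteq> E"
  shows "rk (contract M {x}) X = V.dim (\<phi> ` insert x X) - 1"
proof -
  have "rk (contract M {x}) X = rk M (X \<union> {x}) - rk M {x}" by (simp add: contract_def rk_def)
  moreover have "rk M {x} = 1" using simple assms(1) by (simp add: simple_def)
  ultimately show ?thesis using rk_eq_dim[of "X \<union> {x}"] assms by simp
qed

lemma dim_insert_phi_pair:
  assumes "x \<in> E" "y \<in> E" "x \<noteq> y"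
  shows "V.dim (insert v {\<phi> x, \<phi> y}) = (if v \<in> V.span {\<phi> x, \<phi> y} then 2 else 3)"
  using dim_insert_independent[OF independent_phi_pair(1)[OF assms]] independent_phi_pair(2)[OF assms]
  by simp

lemma simplification_set_contract_point:
  assumes x: "x \<in> E" and S: "is_simplification_set (contract M {x}) S"
  shows "S \<subseteq> E - {x}" and "\<And>e. e \<in> E - {x} \<Longrightarrow> \<exists>!s. s \<in> S \<and> s \<in> line x e"
proof -
  have gnd: "gnd (contract M {x}) = E - {x}" by (simp add: contract_def gnd_def)
  show SE: "S \<subseteq> E - {x}" using S unfolding is_simplification_set_def gnd by blast
  fix e assume e: "e \<in> E - {x}"
  have "rk (contract M {x}) {e} = V.dim {\<phi> x, \<phi> e} - 1"
    using rk_contract_point[OF x, of "{e}"] e by simp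
  also have "\<dots> = 1"
    using rk_le_2[of "{x, e}"] rk_eq_dim[of "{x, e}"] x e by auto
  finally have "\<exists>!s. s \<in> S \<and> rk (contract M {x}) {e, s} = 1"
    using S e unfolding is_simplification_set_def gnd by blast
  moreover have "rk (contract M {x}) {e, s} = 1 \<longleftrightarrow> s \<in> line x e" if "s \<in> S" for s
  proof -
    have "s \<in> E" using that SE by blast
    then have "rk (contract M {x}) {e, s} = V.dim (insert (\<phi> s) {\<phi> x, \<phi> e}) - 1"
      using rk_contract_point[OF x, of "{e, s}"] e by (simp add: insert_commute)
    moreover have "e \<in> E" "x \<noteq> e" using e by auto
    ultimately show ?thesis using dim_insert_phi_pair[OF x] \<open>s \<in> E\<close> by (simp add: line_def)
  qed
  ultimately show "\<exists>!s. s \<in> S \<and> s \<in> line x e" by blast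
qed

end

locale simple_rep_plane =
  simple_rep M \<phi> for M :: "'a matroid" and \<phi> :: "'a \<Rightarrow> nat \<Rightarrow> 'f::{field,finite}" +
  fixes a b c :: 'a
  assumes abc_in: "a \<in> gnd M" "b \<in> gnd M" "c \<in> gnd M"
    and a_ne_b: "a \<noteq> b"
    and c_off_line: "\<phi> c \<notin> V.span {\<phi> a, \<phi> b}"
begin

definition plane :: "'a set" where
  "plane = {z \<in> E. \<phi> z \<in> V.span {\<phi> a, \<phi> b, \<phi> c}}"

definition plane_lines :: "'a set set" where
  "plane_lines = {line u v | u v. u \<in> plane \<and> v \<in> plane \<and> u \<noteq> v}"

lemma plane_subset: "plane \<subseteq> E"
  by (auto simp: plane_def)

lemma finite_plane: "finite plane"
  using finite_subset[OF plane_subset finite_gnd] .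

lemma abc_in_plane: "a \<in> plane" "b \<in> plane" "c \<in> plane"
  using abc_in by (auto simp: plane_def intro: V.span_base)

lemmas independent_abc = independent_phi_triple[OF abc_in(1,2) a_ne_b c_off_line]

lemma span_plane:
  assumes "x \<in> plane" "y \<in> plane" "z \<in> plane" "x \<noteq> y" "\<phi> z \<notin> V.span {\<phi> x, \<phi> y}"
  shows "V.span {\<phi> x, \<phi> y, \<phi> z} = V.span {\<phi> a, \<phi> b, \<phi> c}"
  using independent_phi_triple[OF _ _ assms(4,5)] assms(1-3) plane_subset independent_abc(2)
  by (intro span_eq_if_independent_card) (auto simp: plane_def)

lemma line_subset_plane:
  assumes "x \<in> plane" "y \<in> plane" shows "line x y \<subseteq> plane"
proof -
  have "V.span {\<phi> x, \<phi> y} \<subseteq> V.span {\<phi> a, \<phi> b, \<phi> c}"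
    using assms by (intro V.span_minimal) (auto simp: plane_def)
  then show ?thesis by (auto simp: line_def plane_def)
qed

lemma plane_noncollinear_through:
  assumes "x \<in> plane"
  obtains y z where "y \<in> plane" "z \<in> plane" "y \<noteq> x" "\<phi> z \<notin> V.span {\<phi> x, \<phi> y}"
proof -
  obtain y where y: "y \<in> {a, b}" "y \<noteq> x" using a_ne_b by auto
  have "\<not> {\<phi> a, \<phi> b, \<phi> c} \<subseteq> V.span {\<phi> x, \<phi> y}"
  proof
    assume "{\<phi> a, \<phi> b, \<phi> c} \<subseteq> V.span {\<phi> x, \<phi> y}"
    from V.independent_span_bound[OF _ independent_abc(1) this]
    have "card {\<phi> a, \<phi> b, \<phi> c} \<le> card {\<phi> x, \<phi> y}" by simp
    also have "\<dots> \<le> 2" by (simp add: card_insert_if)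
    finally show False using independent_abc(2) by simp
  qed
  then obtain z where z: "z \<in> {a, b, c}" "\<phi> z \<notin> V.span {\<phi> x, \<phi> y}" by auto
  have "y \<in> plane" "z \<in> plane" using y(1) z(1) abc_in_plane by auto
  then show ?thesis using that y(2) z(2) by blast
qed

sublocale plane_space: finite_linear_space plane plane_lines
proof
  show "finite plane" by (rule finite_plane)
  fix l assume "l \<in> plane_lines"
  then obtain u v where uv: "u \<in> plane" "v \<in> plane" "u \<noteq> v" "l = line u v"
    by (auto simp: plane_lines_def)
  then show "l \<subseteq> plane" using line_subset_plane by blast
  show "2 \<le> card l" using card_line_bounds(1) uv plane_subset by blast
next
  fix x y assume xy: "x \<in> plane" "y \<in> plane" "x \<noteq> y"
  then have "x \<in> E" "y \<in> E" using plane_subset by auto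
  show "\<exists>!l. l \<in> plane_lines \<and> x \<in> l \<and> y \<in> l"
  proof
    show "line x y \<in> plane_lines \<and> x \<in> line x y \<and> y \<in> line x y"
      using xy mem_line \<open>x \<in> E\<close> \<open>y \<in> E\<close> unfolding plane_lines_def by blast
  next
    fix l assume l: "l \<in> plane_lines \<and> x \<in> l \<and> y \<in> l"
    then obtain u v where "u \<in> plane" "v \<in> plane" "u \<noteq> v" "l = line u v"
      by (auto simp: plane_lines_def)
    then show "l = line x y" using line_eq[of u v x y] l xy(3) plane_subset by blast
  qed
qed

lemma pencil_eq:
  assumes "x \<in> plane" shows "plane_space.pencil x = line x ` (plane - {x})"
proof
  show "plane_space.pencil x \<subseteq> line x ` (plane - {x})"
  proof
    fix l assume "l \<in> plane_space.pencil x"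
    then obtain u v where l: "u \<in> plane" "v \<in> plane" "u \<noteq> v" "l = line u v" "x \<in> l"
      unfolding plane_space.pencil_def by (auto simp: plane_lines_def)
    then obtain y where y: "y \<in> {u, v}" "y \<noteq> x" by blast
    have "u \<in> E" "v \<in> E" using l(1,2) plane_subset by auto
    then have "line x y = l" using line_eq[of u v x y] l mem_line y by auto
    moreover have "y \<in> plane - {x}" using y l(1,2) by auto
    ultimately show "l \<in> line x ` (plane - {x})" by blast
  qed
  show "line x ` (plane - {x}) \<subseteq> plane_space.pencil x"
    using assms plane_subset mem_line unfolding plane_space.pencil_def by (fastforce simp: plane_lines_def)
qed

text \<open>A simplification of \<open>M / x\<close> has exactly one point on each line through \<open>x\<close>, so
  \<open>line x\<close> maps its points in the plane bijectively onto the pencil of \<open>x\<close>.\<close>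

lemma card_pencil_eq_card_simplification_Int:
  assumes x: "x \<in> plane" and S: "is_simplification_set (contract M {x}) S"
  shows "card (plane_space.pencil x) = card (S \<inter> plane)"
proof -
  have xE: "x \<in> E" using x plane_subset by blast
  note SE = simplification_set_contract_point(1)[OF xE S]
    and unique = simplification_set_contract_point(2)[OF xE S]
  have "inj_on (line x) (S \<inter> plane)"
  proof (rule inj_onI)
    fix s s' assume s: "s \<in> S \<inter> plane" "s' \<in> S \<inter> plane" "line x s = line x s'"
    then have sE: "s \<in> E - {x}" "s' \<in> E - {x}" using SE by auto
    then have "s \<in> line x s'" "s' \<in> line x s'" using mem_line[OF xE] s(3) by auto
    then show "s = s'" using unique[OF sE(2)] s(1,2) by blast
  qed
  moreover have "line x ` (S \<inter> plane) = line x ` (plane - {x})"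
  proof
    show "line x ` (S \<inter> plane) \<subseteq> line x ` (plane - {x})" using SE by auto
    show "line x ` (plane - {x}) \<subseteq> line x ` (S \<inter> plane)"
    proof
      fix l assume "l \<in> line x ` (plane - {x})"
      then obtain y where y: "y \<in> plane" "y \<noteq> x" "l = line x y" by blast
      then have yE: "y \<in> E" using plane_subset by blast
      then obtain s where s: "s \<in> S" "s \<in> line x y" using unique[of y] y(2) by blast
      then have "s \<noteq> x" using SE by blast
      then have "line x s = l"
        using line_eq[OF xE yE y(2)[symmetric] _ s(2)] mem_line[OF xE yE] y(3) by auto
      moreover have "s \<in> plane" using s(2) line_subset_plane[OF x y(1)] by blast
      ultimately show "l \<in> line x ` (S \<inter> plane)" using s(1) by blast
    qed
  qed
  ultimately show ?thesis using pencil_eq[OF x] card_image by metis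
qed

lemma simplification_spans_plane:
  assumes x: "x \<in> plane" and S: "is_simplification_set (contract M {x}) S"
  obtains u v where "u \<in> S \<inter> plane" "v \<in> S \<inter> plane" "x \<noteq> u" "\<phi> v \<notin> V.span {\<phi> x, \<phi> u}"
proof -
  have xE: "x \<in> E" using x plane_subset by blast
  note SE = simplification_set_contract_point(1)[OF xE S]
    and unique = simplification_set_contract_point(2)[OF xE S]
  obtain y z where yz: "y \<in> plane" "z \<in> plane" "y \<noteq> x" "\<phi> z \<notin> V.span {\<phi> x, \<phi> y}"
    using plane_noncollinear_through[OF x] by blast
  have yE: "y \<in> E" and zE: "z \<in> E" using yz(1,2) plane_subset by auto
  have "z \<noteq> x" using yz(4) V.span_base[of "\<phi> x"] by blast
  obtain u where u: "u \<in> S" "u \<in> line x y" using unique[of y] yE yz(3) by blast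
  obtain v where v: "v \<in> S" "v \<in> line x z" using unique[of z] zE \<open>z \<noteq> x\<close> by blast
  have uE: "u \<in> E" "x \<noteq> u" and vE: "v \<in> E" "x \<noteq> v" using u(1) v(1) SE by auto
  have line_u: "line x u = line x y"
    using line_eq[OF xE yE yz(3)[symmetric] _ u(2) uE(2)] mem_line[OF xE yE] by blast
  have line_v: "line x v = line x z"
    using line_eq[OF xE zE \<open>z \<noteq> x\<close>[symmetric] _ v(2) vE(2)] mem_line[OF xE zE] by blast
  have "\<phi> v \<notin> V.span {\<phi> x, \<phi> u}"
  proof
    assume "\<phi> v \<in> V.span {\<phi> x, \<phi> u}"
    then have "line x v = line x u"
      using line_eq[OF xE uE, of x v] vE mem_line[OF xE uE(1)] by (auto simp: line_def)
    then have "z \<in> line x y" using line_u line_v mem_line[OF xE zE] by auto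
    then show False using yz(4) by (simp add: line_def)
  qed
  moreover have "u \<in> plane" "v \<in> plane"
    using u(2) v(2) line_subset_plane[OF x yz(1)] line_subset_plane[OF x yz(2)] by auto
  ultimately show ?thesis using that u(1) v(1) uE(2) by blast
qed

lemma mem_plane_iff_rk_contract:
  assumes "x \<in> plane" "u \<in> plane" "v \<in> plane" "x \<noteq> u" "\<phi> v \<notin> V.span {\<phi> x, \<phi> u}"
    and "s \<in> E"
  shows "s \<in> plane \<longleftrightarrow> rk (contract M {x}) {u, v, s} = 2"
proof -
  have E: "x \<in> E" "u \<in> E" "v \<in> E" using assms(1-3) plane_subset by auto
  note indep = independent_phi_triple[OF E(1,2) assms(4,5)]
  have "rk (contract M {x}) {u, v, s} = V.dim (insert (\<phi> s) {\<phi> x, \<phi> u, \<phi> v}) - 1"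
    using rk_contract_point[OF E(1), of "{u, v, s}"] E assms(6) by (simp add: insert_commute)
  also have "\<dots> = (if \<phi> s \<in> V.span {\<phi> a, \<phi> b, \<phi> c} then 2 else 3)"
    using dim_insert_independent[OF indep(1)] indep(2) span_plane[OF assms(1-5)] by simp
  finally show ?thesis using assms(6) by (simp add: plane_def)
qed

text \<open>An isomorphism of that simplification with a projective geometry maps the points of
  the simplification lying in the plane onto a projective line.\<close>

lemma card_simplification_Int_plane:
  assumes x: "x \<in> plane" and S: "is_simplification_set (contract M {x}) S"
    and iso: "iso (restrict (contract M {x}) S) (PG n TYPE('f))"
  shows "card (S \<inter> plane) = Suc CARD('f)"
proof -
  have SE: "S \<subseteq> E - {x}" using x plane_subset simplification_set_contract_point(1)[OF _ S] by blast
  obtain g where g: "bij_betw g S (gnd (PG n TYPE('f)))"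
    and rk_g0: "\<forall>Y\<subseteq>S. rk (PG n TYPE('f)) (g ` Y) = rk (contract M {x}) Y"
    using iso unfolding iso_def by auto
  have rk_g: "V.dim (g ` Y) = rk (contract M {x}) Y" if "Y \<subseteq> S" for Y
    using rk_g0 that rk_PG finite_subset[OF _ finite_gnd] SE
    by (metis Diff_subset finite_imageI subset_trans)
  obtain u v where uv: "u \<in> S \<inter> plane" "v \<in> S \<inter> plane" "x \<noteq> u" "\<phi> v \<notin> V.span {\<phi> x, \<phi> u}"
    by (rule simplification_spans_plane[OF x S])
  have "u \<noteq> v" using uv(4) V.span_base[of "\<phi> u"] by blast
  then have guv: "g u \<in> gnd (PG n TYPE('f))" "g v \<in> gnd (PG n TYPE('f))" "g u \<noteq> g v"
    using g uv(1,2) by (auto simp: bij_betw_def dest: inj_onD)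
  have key: "g s \<in> V.span {g u, g v} \<longleftrightarrow> s \<in> plane" if s: "s \<in> S" for s
  proof -
    have "(if g s \<in> V.span {g u, g v} then 2 else 3) = V.dim (insert (g s) {g u, g v})"
      using dim_insert_independent[OF independent_PG_pair[OF guv]] guv(3) by simp
    also have "\<dots> = rk (contract M {x}) {u, v, s}"
      using rk_g[of "{u, v, s}"] uv(1,2) s by (simp add: insert_commute)
    finally show ?thesis
      using mem_plane_iff_rk_contract[OF x _ _ uv(3,4)] uv(1,2) s SE
      by (auto split: if_splits)
  qed
  have image: "g ` (S \<inter> plane) = {p \<in> gnd (PG n TYPE('f)). p \<in> V.span {g u, g v}}"
  proof
    show "g ` (S \<inter> plane) \<subseteq> {p \<in> gnd (PG n TYPE('f)). p \<in> V.span {g u, g v}}"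
      using key g unfolding bij_betw_def by auto
    show "{p \<in> gnd (PG n TYPE('f)). p \<in> V.span {g u, g v}} \<subseteq> g ` (S \<inter> plane)"
    proof
      fix p assume p: "p \<in> {p \<in> gnd (PG n TYPE('f)). p \<in> V.span {g u, g v}}"
      then obtain s where "s \<in> S" "p = g s" using g unfolding bij_betw_def by auto
      then show "p \<in> g ` (S \<inter> plane)" using key p by auto
    qed
  qed
  have "inj_on g (S \<inter> plane)" using g by (auto simp: bij_betw_def intro: inj_on_subset)
  from card_image[OF this] show ?thesis unfolding image card_PG_line[OF guv] by simp
qed

lemma rk_subset_plane:
  assumes short: "\<forall>l\<in>plane_lines. card l = 2" and X: "X \<subseteq> plane"
  shows "rk M X = min 3 (card X)"
proof -
  have XE: "X \<subseteq> E" using X plane_subset by blast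
  show ?thesis
  proof (cases "card X \<le> 2")
    case True
    then show ?thesis using rk_le_2[OF XE] by simp
  next
    case False
    then obtain Y where "Y \<subseteq> X" "card Y = 3"
      using obtain_subset_with_card_n[of 3 X] by force
    then obtain u v w where uvw: "u \<in> X" "v \<in> X" "w \<in> X" "u \<noteq> v" "w \<noteq> u" "w \<noteq> v"
      unfolding card_3_iff by blast
    have uvE: "u \<in> E" "v \<in> E" "w \<in> E" using uvw(1-3) XE by auto
    have "line u v \<in> plane_lines" using uvw(1,2,4) X unfolding plane_lines_def by blast
    then have "card (line u v) \<le> card {u, v}" using short uvw(4) by simp
    moreover have "{u, v} \<subseteq> line u v" using mem_line[OF uvE(1,2)] by blast
    ultimately have "line u v = {u, v}" using card_seteq[OF finite_line] by blast
    then have off: "\<phi> w \<notin> V.span {\<phi> u, \<phi> v}" using uvw(5,6) uvE(3) by (auto simp: line_def)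
    have span: "V.span {\<phi> u, \<phi> v, \<phi> w} = V.span {\<phi> a, \<phi> b, \<phi> c}"
      using span_plane[OF _ _ _ uvw(4) off] uvw(1-3) X by blast
    have "\<phi> ` X \<subseteq> V.span {\<phi> u, \<phi> v, \<phi> w}"
      unfolding span using X by (auto simp: plane_def)
    then have "V.dim (\<phi> ` X) = 3"
      using independent_phi_triple[OF uvE(1,2) uvw(4) off] uvw(1-3)
      by (intro V.dim_unique[of "{\<phi> u, \<phi> v, \<phi> w}"]) auto
    then show ?thesis using False rk_eq_dim[OF XE] by simp
  qed
qed

lemma rk_plane: "rk M plane = 3"
proof -
  have "V.dim (\<phi> ` plane) = 3"
    using independent_abc abc_in_plane by (intro V.dim_unique[of "{\<phi> a, \<phi> b, \<phi> c}"]) (auto simp: plane_def)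
  then show ?thesis using rk_eq_dim[OF plane_subset] by simp
qed

lemma is_flat_plane: "is_flat M plane"
  unfolding is_flat_def
proof (intro conjI ballI plane_subset)
  fix e assume e: "e \<in> E - plane"
  then have off: "\<phi> e \<notin> V.span {\<phi> a, \<phi> b, \<phi> c}" by (simp add: plane_def)
  moreover have "\<phi> e \<notin> {\<phi> a, \<phi> b, \<phi> c}" using off V.span_superset[of "{\<phi> a, \<phi> b, \<phi> c}"] by blast
  ultimately have card4: "card (insert (\<phi> e) {\<phi> a, \<phi> b, \<phi> c}) = 4"
    using independent_abc(2) by simp
  have "insert (\<phi> e) {\<phi> a, \<phi> b, \<phi> c} \<subseteq> \<phi> ` insert e plane" using abc_in_plane by auto
  from card_le_dim[OF V.independent_insertI[OF off independent_abc(1)] this]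
  have "4 \<le> V.dim (\<phi> ` insert e plane)" using card4 finite_plane by simp
  moreover have "insert e plane \<subseteq> E" using e plane_subset by blast
  ultimately show "rk M plane < rk M (insert e plane)" using rk_plane rk_eq_dim by simp
qed

lemma plane_induced_minor:
  assumes q: "3 \<le> CARD('f)"
    and lines: "\<forall>l\<in>plane_lines. card l = 2 \<or> card l = Suc CARD('f)"
    and short: "card (line a b) = 2"
    and contractions: "\<forall>x\<in>plane. \<exists>S n. is_simplification_set (contract M {x}) S \<and>
                         iso (restrict (contract M {x}) S) (PG n TYPE('f))"
  shows "induced_minor M (restrict M plane)" "iso (restrict M plane) (uniform 3 (CARD('f) + 2))"
proof -
  have pencils: "card (plane_space.pencil x) = Suc CARD('f)" if "x \<in> plane" for x
    using contractions card_pencil_eq_card_simplification_Int card_simplification_Int_plane that by metis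
  have "line a b \<in> plane_lines" using abc_in_plane a_ne_b unfolding plane_lines_def by blast
  then have all_short: "\<forall>l\<in>plane_lines. card l = 2"
    using plane_space.all_lines_short[OF _ pencils q] lines short by blast
  then have "card plane = CARD('f) + 2"
    using plane_space.card_points_if_all_lines_short[OF _ pencils] lines abc_in_plane(1) q by simp
  then show "iso (restrict M plane) (uniform 3 (CARD('f) + 2))"
    using iso_restrict_uniform[OF finite_plane rk_subset_plane[OF all_short]] by simp
  show "induced_minor M (restrict M plane)"
    by (rule induced_minor.flat[OF induced_minor.refl is_flat_plane])
qed

end



context simple_rep
begin

lemma plane_uniform_minor:
  assumes q: "3 \<le> CARD('f)" and r: "3 \<le> rk M E"
    and xy: "x \<in> E" "y \<in> E" "x \<noteq> y" "card (line x y) = 2"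
    and lines: "\<forall>u\<in>E. \<forall>v\<in>E. u \<noteq> v \<longrightarrow> card (line u v) = 2 \<or> card (line u v) = Suc CARD('f)"
    and contractions: "\<forall>e\<in>E. \<exists>S n. is_simplification_set (contract M {e}) S \<and>
                         iso (restrict (contract M {e}) S) (PG n TYPE('f))"
  shows "\<exists>N. induced_minor M N \<and> iso N (uniform 3 (CARD('f) + 2))"
proof -
  obtain z where "z \<in> E" "\<phi> z \<notin> V.span {\<phi> x, \<phi> y}" using exists_off_line[OF r xy(1,2)] .
  then interpret simple_rep_plane M \<phi> x y z by unfold_locales (use xy in auto)
  have "\<forall>l\<in>plane_lines. card l = 2 \<or> card l = Suc CARD('f)"
    using lines plane_subset unfolding plane_lines_def by blast
  moreover have "\<forall>e\<in>plane. \<exists>S n. is_simplification_set (contract M {e}) S \<and>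
                   iso (restrict (contract M {e}) S) (PG n TYPE('f))"
    using contractions plane_subset by blast
  ultimately show ?thesis using plane_induced_minor[OF q _ xy(4)] by blast
qed

end

theorem lemma3p4:
  fixes M :: "'a matroid" and r :: nat
    and F :: "'f::{field, finite} itself"
  assumes "card (UNIV :: 'f set) > 2"
    and "matroid M" and "simple M" and "representable_over TYPE('f) M"
    and "matroid_rank M = r" and "r \<ge> 3"
    and "\<not> iso M (PG (r - 1) TYPE('f))"
    and "\<forall>e \<in> gnd M. \<exists>S. is_simplification_set (contract M {e}) S \<and>
            iso (restrict (contract M {e}) S) (PG (r - 2) TYPE('f))"
  shows "\<exists>N. induced_minor M N \<and>
           ((\<exists>k. 3 \<le> k \<and> k \<le> card (UNIV :: 'f set) \<and> iso N (uniform 2 k)) \<or>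
            iso N (uniform 3 (card (UNIV :: 'f set) + 2)))"
proof -
  obtain \<phi> :: "'a \<Rightarrow> nat \<Rightarrow> 'f" where "simple_rep M \<phi>"
    using simple_rep_if_representable assms(2-4) by blast
  then interpret simple_rep M \<phi> .
  have r: "rk M E = Suc (r - 1)" "3 \<le> rk M E" using assms(5,6) by (auto simp: matroid_rank_def)
  have contractions: "\<forall>e\<in>E. \<exists>S n. is_simplification_set (contract M {e}) S \<and>
                       iso (restrict (contract M {e}) S) (PG n TYPE('f))"
    using assms(8) by blast
  have q: "3 \<le> CARD('f)" using assms(1) by simp
  show ?thesis
  proof (cases rule: line_sizes_cases)
    case 1
    then show ?thesis using iso_PG_if_lines_full[OF _ r(1)] assms(7) by blast
  next
    case (2 x y)
    then show ?thesis using line_induced_minor[OF 2(1-3)] by blast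
  next
    case (3 x y)
    then show ?thesis using plane_uniform_minor[OF q r(2) 3 contractions] by blast
  qed
qed

end
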